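(* Let $X,Y$ be random variables on finite alphabets $\mathcal{X},\mathcal{Y}$ with $I(X;Y)=0$, and let $Z=(X,Y)$ (a random variable on $\mathcal{Z}=\mathcal{X}\times\mathcal{Y}$). Then $\operatorname{Red}(X,Y\to Z)=0$, where $\operatorname{Red}$ is the redundant information defined below.
   Context: For each $y\in\mathcal{Y}$ with $\Pr(Y=y)>0$, let $(A_y,B_y,C_y)$ be the random triple on $\mathcal{X}\times\mathcal{Y}\times\mathcal{Z}$ with $\Pr(A_y=x,B_y=y',C_y=z)=0$ if $\Pr(Z=z)=0$ and $\Pr(A_y=x,B_y=y',C_y=z)=\Pr(X=x,Y=y',Z=z)\Pr(Z=z\mid Y=y)/\Pr(Z=z)$ otherwise. The unique information is $\operatorname{Un}(X\to Z\mid Y)=\sum_{y:\Pr(Y=y)>0}\Pr(Y=y)\,I(A_y;C_y)$ and the redundant information is $\operatorname{Red}(X,Y\to Z)=I(X;Z)-\operatorname{Un}(X\to Z\mid Y)$, where $I$ is mutual information. *)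

theory Defs
  imports Complex_Main
begin

text \<open>Finite alphabets are modelled by finite types. A joint distribution of a
triple (X,Y,Z) is a probability mass function p x y z (nonnegative, summing to 1).
A joint distribution of a pair is q a b.\<close>

definition is_pmf3 :: "('x::finite \<Rightarrow> 'y::finite \<Rightarrow> 'z::finite \<Rightarrow> real) \<Rightarrow> bool" where
  "is_pmf3 p \<longleftrightarrow> (\<forall>x y z. 0 \<le> p x y z) \<and> (\<Sum>x\<in>UNIV. \<Sum>y\<in>UNIV. \<Sum>z\<in>UNIV. p x y z) = 1"

definition mutual_info :: "('a::finite \<Rightarrow> 'b::finite \<Rightarrow> real) \<Rightarrow> real" where
  "mutual_info q = (\<Sum>a\<in>UNIV. \<Sum>b\<in>UNIV. if q a b = 0 then 0
      else q a b * log 2 (q a b / ((\<Sum>b'\<in>UNIV. q a b') * (\<Sum>a'\<in>UNIV. q a' b))))"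

definition PX :: "('x::finite \<Rightarrow> 'y::finite \<Rightarrow> 'z::finite \<Rightarrow> real) \<Rightarrow> 'x \<Rightarrow> real" where
  "PX p x = (\<Sum>y\<in>UNIV. \<Sum>z\<in>UNIV. p x y z)"
definition PY :: "('x::finite \<Rightarrow> 'y::finite \<Rightarrow> 'z::finite \<Rightarrow> real) \<Rightarrow> 'y \<Rightarrow> real" where
  "PY p y = (\<Sum>x\<in>UNIV. \<Sum>z\<in>UNIV. p x y z)"
definition PZ :: "('x::finite \<Rightarrow> 'y::finite \<Rightarrow> 'z::finite \<Rightarrow> real) \<Rightarrow> 'z \<Rightarrow> real" where
  "PZ p z = (\<Sum>x\<in>UNIV. \<Sum>y\<in>UNIV. p x y z)"
definition PXY :: "('x::finite \<Rightarrow> 'y::finite \<Rightarrow> 'z::finite \<Rightarrow> real) \<Rightarrow> 'x \<Rightarrow> 'y \<Rightarrow> real" where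
  "PXY p x y = (\<Sum>z\<in>UNIV. p x y z)"
definition PXZ :: "('x::finite \<Rightarrow> 'y::finite \<Rightarrow> 'z::finite \<Rightarrow> real) \<Rightarrow> 'x \<Rightarrow> 'z \<Rightarrow> real" where
  "PXZ p x z = (\<Sum>y\<in>UNIV. p x y z)"
definition PYZ :: "('x::finite \<Rightarrow> 'y::finite \<Rightarrow> 'z::finite \<Rightarrow> real) \<Rightarrow> 'y \<Rightarrow> 'z \<Rightarrow> real" where
  "PYZ p y z = (\<Sum>x\<in>UNIV. p x y z)"

text \<open>The random triple (A_y, B_y, C_y):
  Pr(A_y=x,B_y=y',C_y=z) = 0 if Pr(Z=z)=0, else Pr(X=x,Y=y',Z=z) Pr(Z=z|Y=y) / Pr(Z=z).\<close>
definition tri :: "('x::finite \<Rightarrow> 'y::finite \<Rightarrow> 'z::finite \<Rightarrow> real) \<Rightarrow> 'y \<Rightarrow> 'x \<Rightarrow> 'y \<Rightarrow> 'z \<Rightarrow> real" where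
  "tri p y x y' z = (if PZ p z = 0 then 0
      else p x y' z * (PYZ p y z / PY p y) / PZ p z)"

definition unique_info :: "('x::finite \<Rightarrow> 'y::finite \<Rightarrow> 'z::finite \<Rightarrow> real) \<Rightarrow> real" where
  "unique_info p = (\<Sum>y\<in>{y. PY p y > 0}.
      PY p y * mutual_info (\<lambda>x z. \<Sum>y'\<in>UNIV. tri p y x y' z))"

definition redundant_info :: "('x::finite \<Rightarrow> 'y::finite \<Rightarrow> 'z::finite \<Rightarrow> real) \<Rightarrow> real" where
  "redundant_info p = mutual_info (PXZ p) - unique_info p"

end

theory Submission
  imports Defs
begin

text \<open>When Z = (X, Y), the pair (X, Z) carries exactly the information of X, so
I(X;Z) = H(X). For each y, the triple (A_y, B_y, C_y) is the conditional law of
(X, Y, Z) given Y = y, hence I(A_y;C_y) = H(X | Y = y) and the unique information is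
H(X | Y). Therefore Red(X,Y \<rightarrow> Z) = H(X) - H(X | Y) = I(X;Y), which vanishes by
hypothesis.\<close>

lemma sum_UNIV_prod:
  "(\<Sum>z\<in>(UNIV::('a::finite \<times> 'b::finite) set). f z) = (\<Sum>a\<in>UNIV. \<Sum>b\<in>UNIV. f (a, b))"
  by (simp add: sum.cartesian_product flip: UNIV_Times_UNIV)

lemma sum_if_const_cond: "(\<Sum>x\<in>A. if P then f x else 0) = (if P then sum f A else 0)"
  by simp

lemma mutual_info_eq_log_sum:
  fixes q :: "'a::finite \<Rightarrow> 'b::finite \<Rightarrow> real"
  assumes nonneg: "\<And>a b. 0 \<le> q a b"
  shows "mutual_info q = (\<Sum>a\<in>UNIV. \<Sum>b\<in>UNIV. if q a b = 0 then 0
    else q a b * (log 2 (q a b) - log 2 (\<Sum>b'\<in>UNIV. q a b') - log 2 (\<Sum>a'\<in>UNIV. q a' b)))"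
  unfolding mutual_info_def
proof (intro sum.cong refl if_cong)
  fix a b
  assume "q a b \<noteq> 0"
  then have pos: "0 < q a b" using nonneg[of a b] by simp
  have "q a b \<le> (\<Sum>b'\<in>UNIV. q a b')" "q a b \<le> (\<Sum>a'\<in>UNIV. q a' b)"
    by (auto intro: member_le_sum simp: nonneg)
  with pos show "q a b * log 2 (q a b / ((\<Sum>b'\<in>UNIV. q a b') * (\<Sum>a'\<in>UNIV. q a' b))) =
      q a b * (log 2 (q a b) - log 2 (\<Sum>b'\<in>UNIV. q a b') - log 2 (\<Sum>a'\<in>UNIV. q a' b))"
    by (simp add: log_divide log_mult)
qed

lemma mutual_info_with_copy:
  fixes r :: "'a::finite \<Rightarrow> 'b::finite \<Rightarrow> real"
  assumes nonneg: "\<And>a b. 0 \<le> r a b"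
  shows "mutual_info (\<lambda>a z. if fst z = a then r a (snd z) else 0) =
    (\<Sum>a\<in>UNIV. \<Sum>b\<in>UNIV. if r a b = 0 then 0 else - (r a b * log 2 (\<Sum>b'\<in>UNIV. r a b')))"
proof -
  let ?Q = "\<lambda>a z. if fst z = a then r a (snd z) else 0"
  have Q_nonneg: "0 \<le> ?Q a z" for a z
    by (simp add: nonneg)
  have row: "(\<Sum>z\<in>UNIV. ?Q a z) = (\<Sum>b\<in>UNIV. r a b)" for a
    unfolding sum_UNIV_prod by (subst sum.swap) simp
  have col: "(\<Sum>a'\<in>UNIV. ?Q a' z) = r (fst z) (snd z)" for z
    by simp
  have "mutual_info ?Q = (\<Sum>a\<in>UNIV. \<Sum>z\<in>UNIV. if ?Q a z = 0 then 0
      else ?Q a z * (log 2 (?Q a z) - log 2 (\<Sum>b'\<in>UNIV. r a b') - log 2 (r (fst z) (snd z))))"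
    unfolding mutual_info_eq_log_sum[of ?Q, OF Q_nonneg] row col ..
  also have "\<dots> = (\<Sum>a\<in>UNIV. \<Sum>a'\<in>UNIV. if a' = a then (\<Sum>b\<in>UNIV. if r a b = 0 then 0
      else - (r a b * log 2 (\<Sum>b'\<in>UNIV. r a b'))) else 0)"
    unfolding sum_UNIV_prod by (intro sum.cong refl) (auto intro!: sum.cong)
  finally show ?thesis by simp
qed

lemma PY_eq_sum_PXY: "PY p y = (\<Sum>x\<in>UNIV. PXY p x y)"
  unfolding PY_def PXY_def ..

context
  fixes p :: "'x::finite \<Rightarrow> 'y::finite \<Rightarrow> ('x \<times> 'y) \<Rightarrow> real"
  assumes nonneg: "\<And>x y z. 0 \<le> p x y z"
    and supported_on_pair: "\<And>x y z. z \<noteq> (x, y) \<Longrightarrow> p x y z = 0"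
begin

lemma PXY_nonneg: "0 \<le> PXY p x y"
  unfolding PXY_def by (simp add: nonneg sum_nonneg)

lemma p_eq_PXY: "p x y z = (if fst z = x then if snd z = y then PXY p x y else 0 else 0)"
proof -
  have "PXY p x y = (\<Sum>z\<in>UNIV. if z = (x, y) then p x y z else 0)"
    unfolding PXY_def by (intro sum.cong) (auto simp: supported_on_pair)
  also have "\<dots> = p x y (x, y)"
    by simp
  finally show ?thesis
    using supported_on_pair[of z x y] by (auto simp: prod_eq_iff)
qed

lemma PXZ_eq_copy: "PXZ p = (\<lambda>x z. if fst z = x then PXY p x (snd z) else 0)"
  by (intro ext) (simp add: PXZ_def p_eq_PXY sum_if_const_cond)

lemma PZ_eq_PXY: "PZ p z = PXY p (fst z) (snd z)"
  by (simp add: PZ_def p_eq_PXY sum_if_const_cond)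

lemma PYZ_eq_PXY: "PYZ p y z = (if snd z = y then PXY p (fst z) y else 0)"
  by (simp add: PYZ_def p_eq_PXY)

lemma tri_eq:
  "tri p y x y' z =
    (if fst z = x then if snd z = y' then if y' = y then PXY p x y / PY p y else 0 else 0 else 0)"
  unfolding tri_def PZ_eq_PXY PYZ_eq_PXY by (subst p_eq_PXY) auto

lemma tri_marginal_eq_copy:
  "(\<lambda>x z. \<Sum>y'\<in>UNIV. tri p y x y' z) =
    (\<lambda>x z. if fst z = x then if snd z = y then PXY p x y / PY p y else 0 else 0)"
  by (intro ext) (simp add: tri_eq sum_if_const_cond)

lemma mutual_info_PXZ:
  "mutual_info (PXZ p) =
    (\<Sum>x\<in>UNIV. \<Sum>y\<in>UNIV. if PXY p x y = 0 then 0
      else - (PXY p x y * log 2 (\<Sum>y'\<in>UNIV. PXY p x y')))"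
  unfolding PXZ_eq_copy by (rule mutual_info_with_copy) (rule PXY_nonneg)

lemma PY_mult_mutual_info_tri:
  assumes PY_pos: "0 < PY p y"
  shows "PY p y * mutual_info (\<lambda>x z. \<Sum>y'\<in>UNIV. tri p y x y' z) =
    (\<Sum>x\<in>UNIV. if PXY p x y = 0 then 0
      else PXY p x y * (log 2 (PY p y) - log 2 (PXY p x y)))"
proof -
  define c where "c x = PXY p x y / PY p y" for x
  have c_nonneg: "0 \<le> c x" for x
    using PY_pos PXY_nonneg[of x y] by (simp add: c_def)
  have "mutual_info (\<lambda>x z. \<Sum>y'\<in>UNIV. tri p y x y' z) =
      mutual_info (\<lambda>x z. if fst z = x then if snd z = y then c x else 0 else 0)"
    unfolding tri_marginal_eq_copy c_def ..
  also have "\<dots> = (\<Sum>x\<in>UNIV. \<Sum>b\<in>UNIV. if (if b = y then c x else 0) = 0 then 0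
      else - ((if b = y then c x else 0) * log 2 (\<Sum>b'\<in>UNIV. if b' = y then c x else 0)))"
    by (rule mutual_info_with_copy) (simp add: c_nonneg)
  also have "\<dots> = (\<Sum>x\<in>UNIV. \<Sum>b\<in>UNIV.
      if b = y then (if c x = 0 then 0 else - (c x * log 2 (c x))) else 0)"
    by (intro sum.cong refl) auto
  also have "\<dots> = (\<Sum>x\<in>UNIV. if c x = 0 then 0 else - (c x * log 2 (c x)))"
    by simp
  finally have mutual_info_eq: "mutual_info (\<lambda>x z. \<Sum>y'\<in>UNIV. tri p y x y' z) =
      (\<Sum>x\<in>UNIV. if c x = 0 then 0 else - (c x * log 2 (c x)))" .
  show ?thesis
    unfolding mutual_info_eq sum_distrib_left
  proof (intro sum.cong refl)
    fix x
    have "PXY p x y \<noteq> 0 \<Longrightarrow> PY p y * - (c x * log 2 (c x)) =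
        PXY p x y * (log 2 (PY p y) - log 2 (PXY p x y))"
      using PY_pos PXY_nonneg[of x y] by (simp add: c_def log_divide algebra_simps)
    then show "PY p y * (if c x = 0 then 0 else - (c x * log 2 (c x))) =
        (if PXY p x y = 0 then 0 else PXY p x y * (log 2 (PY p y) - log 2 (PXY p x y)))"
      using PY_pos by (simp add: c_def)
  qed
qed

lemma unique_info_eq:
  "unique_info p =
    (\<Sum>x\<in>UNIV. \<Sum>y\<in>UNIV. if PXY p x y = 0 then 0
      else PXY p x y * (log 2 (PY p y) - log 2 (PXY p x y)))"
proof -
  let ?H = "\<lambda>y. \<Sum>x\<in>UNIV. if PXY p x y = 0 then 0
    else PXY p x y * (log 2 (PY p y) - log 2 (PXY p x y))"
  have "unique_info p = (\<Sum>y\<in>{y. 0 < PY p y}. ?H y)"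
    unfolding unique_info_def by (intro sum.cong refl) (simp add: PY_mult_mutual_info_tri)
  also have "\<dots> = (\<Sum>y\<in>UNIV. ?H y)"
  proof (intro sum.mono_neutral_left ballI)
    fix y
    assume "y \<in> UNIV - {y. 0 < PY p y}"
    then have "(\<Sum>x\<in>UNIV. PXY p x y) = 0"
      using sum_nonneg[of UNIV "\<lambda>x. PXY p x y"] by (auto simp: PXY_nonneg PY_eq_sum_PXY)
    then have "PXY p x y = 0" for x
      by (simp add: PXY_nonneg sum_nonneg_eq_0_iff)
    then show "?H y = 0"
      by simp
  qed auto
  finally show ?thesis
    by (subst sum.swap) simp
qed

lemma redundant_info_eq_mutual_info_PXY: "redundant_info p = mutual_info (PXY p)"
  unfolding redundant_info_def mutual_info_PXZ unique_info_eq
    mutual_info_eq_log_sum[of "PXY p", OF PXY_nonneg] PY_eq_sum_PXY sum_subtractf[symmetric]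
  by (intro sum.cong refl) (simp add: algebra_simps)

end

theorem lemma10:
  fixes p :: "'x::finite \<Rightarrow> 'y::finite \<Rightarrow> ('x \<times> 'y) \<Rightarrow> real"
  assumes "is_pmf3 p"
    and "\<And>x y z. z \<noteq> (x, y) \<Longrightarrow> p x y z = 0"
    and "mutual_info (PXY p) = 0"
  shows "redundant_info p = 0"
proof -
  have nonneg: "\<And>x y z. 0 \<le> p x y z"
    using assms(1) unfolding is_pmf3_def by blast
  from redundant_info_eq_mutual_info_PXY[where p = p, OF nonneg assms(2)] show ?thesis
    using assms(3) by simp
qed

end
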